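(* Let $X$, $Y$ be bigraphs and $f,g:X\to Y$ bigraph homomorphisms. The following are equivalent: (1) $f$ and $g$ are $\times$-homotopic; (2) there is a $\times$-homotopy from $f$ to $g$; (3) $f$ and $g$ belong to the same connected component of the maximal reflexive subgraph of $Y^X$.
   Context: A graph is a set $V$ with a symmetric relation $E\subset V\times V$ (loops allowed); it is reflexive if every vertex has a loop, and the maximal reflexive subgraph is the induced subgraph on looped vertices. $K_2$ has vertices $0,1$ and edges $(0,1),(1,0)$. A bigraph is a graph $X$ with a graph homomorphism $\varepsilon_X:X\to K_2$; $V_i(X)=\varepsilon_X^{-1}(i)$; bigraph homomorphisms commute with colorings. A 2-colored multi-homomorphism $\eta$ from $X$ to $Y$ assigns to each $v\in V(X)$ a finite nonempty $\eta(v)\subset V_i(Y)$ for $v\in V_i(X)$, with $\eta(v)\times\eta(w)\subset E(Y)$ whenever $(v,w)\in E(X)$; $\mathrm{Hom}_{/K_2}(X,Y)$ is the poset of these ordered by pointwise inclusion, and a homomorphism $f$ is identified with $v\mapsto\{f(v)\}$. $f,g$ are $\times$-homotopic if they lie in the same connected component of $\mathrm{Hom}_{/K_2}(X,Y)$. For $n\ge0$, $I_n$ is the graph with vertices $0,\dots,n$ and edges $(a,b)$ with $|a-b|\le1$; $X\times I_n$ is the categorical product (edges $((a,s),(a',s'))$ with $(a,a')\in E(X)$, $(s,s')\in E(I_n)$), colored via the first coordinate. A $\times$-homotopy from $f$ to $g$ is a bigraph homomorphism $F:X\times I_n\to Y$ for some $n\ge0$ with $F(a,0)=f(a)$ and $F(a,n)=g(a)$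 for all $a$. $Y^X$ is the graph whose vertices are maps $h:V(X)\to V(Y)$ with $\varepsilon_Y\circ h=\varepsilon_X$, with $h,h'$ adjacent iff $(h(a),h'(a'))\in E(Y)$ for all $(a,a')\in E(X)$. *)

theory Defs
  imports "HOL-Library.FuncSet"
begin

definition graph :: "'a set \<Rightarrow> ('a \<times> 'a) set \<Rightarrow> bool" where
  "graph V E \<longleftrightarrow> E \<subseteq> V \<times> V \<and> sym E"

definition K2_V :: "nat set" where "K2_V = {0, 1}"
definition K2_E :: "(nat \<times> nat) set" where "K2_E = {(0, 1), (1, 0)}"

definition bigraph :: "'a set \<Rightarrow> ('a \<times> 'a) set \<Rightarrow> ('a \<Rightarrow> nat) \<Rightarrow> bool" where
  "bigraph V E c \<longleftrightarrow> graph V E \<and> (\<forall>v\<in>V. c v \<in> K2_V) \<and> (\<forall>(v, w)\<in>E. (c v, c w) \<in> K2_E)"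

definition bigraph_hom ::
  "'a set \<Rightarrow> ('a \<times> 'a) set \<Rightarrow> ('a \<Rightarrow> nat) \<Rightarrow> 'b set \<Rightarrow> ('b \<times> 'b) set \<Rightarrow> ('b \<Rightarrow> nat)
   \<Rightarrow> ('a \<Rightarrow> 'b) \<Rightarrow> bool" where
  "bigraph_hom VX EdX cX VY EdY cY f \<longleftrightarrow>
     (\<forall>v\<in>VX. f v \<in> VY) \<and> (\<forall>(v, w)\<in>EdX. (f v, f w) \<in> EdY) \<and> (\<forall>v\<in>VX. cY (f v) = cX v)"

text \<open>2-colored multi-homomorphisms (as functions that are empty outside V(X), so that
  they correspond exactly to the elements of the poset).\<close>
definition multi_hom ::
  "'a set \<Rightarrow> ('a \<times> 'a) set \<Rightarrow> ('a \<Rightarrow> nat) \<Rightarrow> 'b set \<Rightarrow> ('b \<times> 'b) set \<Rightarrow> ('b \<Rightarrow> nat)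
   \<Rightarrow> ('a \<Rightarrow> 'b set) \<Rightarrow> bool" where
  "multi_hom VX EdX cX VY EdY cY \<eta> \<longleftrightarrow>
     (\<forall>v\<in>VX. finite (\<eta> v) \<and> \<eta> v \<noteq> {} \<and> \<eta> v \<subseteq> {y\<in>VY. cY y = cX v}) \<and>
     (\<forall>v. v \<notin> VX \<longrightarrow> \<eta> v = {}) \<and>
     (\<forall>(v, w)\<in>EdX. \<eta> v \<times> \<eta> w \<subseteq> EdY)"

text \<open>Comparability relation of the poset Hom_{/K2}(X,Y) (pointwise inclusion);
  its connected components are those of the poset.\<close>
definition hom_comparable ::
  "'a set \<Rightarrow> ('a \<times> 'a) set \<Rightarrow> ('a \<Rightarrow> nat) \<Rightarrow> 'b set \<Rightarrow> ('b \<times> 'b) set \<Rightarrow> ('b \<Rightarrow> nat)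
   \<Rightarrow> (('a \<Rightarrow> 'b set) \<times> ('a \<Rightarrow> 'b set)) set" where
  "hom_comparable VX EdX cX VY EdY cY =
     {(\<eta>, \<eta>'). multi_hom VX EdX cX VY EdY cY \<eta> \<and> multi_hom VX EdX cX VY EdY cY \<eta>' \<and>
               ((\<forall>v. \<eta> v \<subseteq> \<eta>' v) \<or> (\<forall>v. \<eta>' v \<subseteq> \<eta> v))}"

definition hom_as_multi :: "'a set \<Rightarrow> ('a \<Rightarrow> 'b) \<Rightarrow> 'a \<Rightarrow> 'b set" where
  "hom_as_multi VX f = (\<lambda>v. if v \<in> VX then {f v} else {})"

definition times_homotopic ::
  "'a set \<Rightarrow> ('a \<times> 'a) set \<Rightarrow> ('a \<Rightarrow> nat) \<Rightarrow> 'b set \<Rightarrow> ('b \<times> 'b) set \<Rightarrow> ('b \<Rightarrow> nat)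
   \<Rightarrow> ('a \<Rightarrow> 'b) \<Rightarrow> ('a \<Rightarrow> 'b) \<Rightarrow> bool" where
  "times_homotopic VX EdX cX VY EdY cY f g \<longleftrightarrow>
     (hom_as_multi VX f, hom_as_multi VX g) \<in> (hom_comparable VX EdX cX VY EdY cY)\<^sup>*"

definition I_V :: "nat \<Rightarrow> nat set" where "I_V n = {0..n}"
definition I_E :: "nat \<Rightarrow> (nat \<times> nat) set" where
  "I_E n = {(a, b). a \<le> n \<and> b \<le> n \<and> a \<le> b + 1 \<and> b \<le> a + 1}"

definition prod_V :: "'a set \<Rightarrow> nat \<Rightarrow> ('a \<times> nat) set" where
  "prod_V VX n = VX \<times> I_V n"
definition prod_E :: "('a \<times> 'a) set \<Rightarrow> nat \<Rightarrow> (('a \<times> nat) \<times> ('a \<times> nat)) set" where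
  "prod_E EdX n = {((a, s), (a', s')). (a, a') \<in> EdX \<and> (s, s') \<in> I_E n}"
definition prod_c :: "('a \<Rightarrow> nat) \<Rightarrow> 'a \<times> nat \<Rightarrow> nat" where
  "prod_c cX = (\<lambda>(a, s). cX a)"

definition times_homotopy ::
  "'a set \<Rightarrow> ('a \<times> 'a) set \<Rightarrow> ('a \<Rightarrow> nat) \<Rightarrow> 'b set \<Rightarrow> ('b \<times> 'b) set \<Rightarrow> ('b \<Rightarrow> nat)
   \<Rightarrow> nat \<Rightarrow> ('a \<times> nat \<Rightarrow> 'b) \<Rightarrow> ('a \<Rightarrow> 'b) \<Rightarrow> ('a \<Rightarrow> 'b) \<Rightarrow> bool" where
  "times_homotopy VX EdX cX VY EdY cY n F f g \<longleftrightarrow>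
     bigraph_hom (prod_V VX n) (prod_E EdX n) (prod_c cX) VY EdY cY F \<and>
     (\<forall>a\<in>VX. F (a, 0) = f a \<and> F (a, n) = g a)"

text \<open>The exponential graph Y^X: vertices are color-preserving maps V(X) \<rightarrow> V(Y)
  (represented extensionally, undefined outside V(X)).\<close>
definition exp_V ::
  "'a set \<Rightarrow> ('a \<Rightarrow> nat) \<Rightarrow> 'b set \<Rightarrow> ('b \<Rightarrow> nat) \<Rightarrow> ('a \<Rightarrow> 'b) set" where
  "exp_V VX cX VY cY = {h \<in> VX \<rightarrow>\<^sub>E VY. \<forall>a\<in>VX. cY (h a) = cX a}"

definition exp_E ::
  "'a set \<Rightarrow> ('a \<times> 'a) set \<Rightarrow> ('a \<Rightarrow> nat) \<Rightarrow> 'b set \<Rightarrow> ('b \<times> 'b) set \<Rightarrow> ('b \<Rightarrow> nat)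
   \<Rightarrow> (('a \<Rightarrow> 'b) \<times> ('a \<Rightarrow> 'b)) set" where
  "exp_E VX EdX cX VY EdY cY =
     {(h, h'). h \<in> exp_V VX cX VY cY \<and> h' \<in> exp_V VX cX VY cY \<and>
               (\<forall>(a, a')\<in>EdX. (h a, h' a') \<in> EdY)}"

definition refl_part_V :: "'v set \<Rightarrow> ('v \<times> 'v) set \<Rightarrow> 'v set" where
  "refl_part_V V E = {v \<in> V. (v, v) \<in> E}"
definition refl_part_E :: "'v set \<Rightarrow> ('v \<times> 'v) set \<Rightarrow> ('v \<times> 'v) set" where
  "refl_part_E V E = E \<inter> (refl_part_V V E \<times> refl_part_V V E)"

definition same_component :: "'v set \<Rightarrow> ('v \<times> 'v) set \<Rightarrow> 'v \<Rightarrow> 'v \<Rightarrow> bool" where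
  "same_component V E u w \<longleftrightarrow> u \<in> V \<and> w \<in> V \<and> (u, w) \<in> E\<^sup>*"

end

theory Submission
  imports Defs
begin

text \<open>A \<times>-homotopy of length n is the same as a walk of length n in the reflexive part of
  Y^X, read off slice by slice. For the poset, choosing one vertex from every set of a
  multi-homomorphism gives looped vertices of Y^X, any two choices from comparable
  multi-homomorphisms are adjacent, and conversely an edge h h' of Y^X is joined in the
  poset through the multi-homomorphism v \<mapsto> {h v, h' v}.\<close>

abbreviation exp_refl_V ::
  "'a set \<Rightarrow> ('a \<times> 'a) set \<Rightarrow> ('a \<Rightarrow> nat) \<Rightarrow> 'b set \<Rightarrow> ('b \<times> 'b) set \<Rightarrow> ('b \<Rightarrow> nat)
   \<Rightarrow> ('a \<Rightarrow> 'b) set" where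
  "exp_refl_V VX EdX cX VY EdY cY \<equiv>
     refl_part_V (exp_V VX cX VY cY) (exp_E VX EdX cX VY EdY cY)"

abbreviation exp_refl_E ::
  "'a set \<Rightarrow> ('a \<times> 'a) set \<Rightarrow> ('a \<Rightarrow> nat) \<Rightarrow> 'b set \<Rightarrow> ('b \<times> 'b) set \<Rightarrow> ('b \<Rightarrow> nat)
   \<Rightarrow> (('a \<Rightarrow> 'b) \<times> ('a \<Rightarrow> 'b)) set" where
  "exp_refl_E VX EdX cX VY EdY cY \<equiv>
     refl_part_E (exp_V VX cX VY cY) (exp_E VX EdX cX VY EdY cY)"

lemma rtrancl_iff_walk:
  "(x, y) \<in> R\<^sup>* \<longleftrightarrow> (\<exists>n p. p 0 = x \<and> p n = y \<and> (\<forall>i<n. (p i, p (Suc i)) \<in> R))"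
  by (metis rtrancl_power relpow_fun_conv)

lemma walk_refl_part_V:
  assumes "\<forall>i<n. (p i, p (Suc i)) \<in> refl_part_E V E" "p n \<in> refl_part_V V E" "i \<le> n"
  shows "p i \<in> refl_part_V V E"
  using assms by (cases "i < n") (auto simp: refl_part_E_def)

lemma sym_walk_near_adjacent:
  assumes "sym R" "\<forall>i<n. (p i, p (Suc i)) \<in> R" "\<forall>i\<le>n. (p i, p i) \<in> R"
    and "i \<le> n" "j \<le> n" "i \<le> j + 1" "j \<le> i + 1"
  shows "(p i, p j) \<in> R"
proof -
  consider "j = i" | "j = Suc i" | "i = Suc j" using assms(6,7) by linarith
  then show ?thesis
    using assms(1-5) by cases (auto intro: symD[OF assms(1)])
qed

lemma sym_exp_E:
  assumes "sym EdX" "sym EdY"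
  shows "sym (exp_E VX EdX cX VY EdY cY)"
proof (rule symI)
  fix h h' assume "(h, h') \<in> exp_E VX EdX cX VY EdY cY"
  moreover have "(h' a, h a') \<in> EdY" if "\<forall>(a, a')\<in>EdX. (h a, h' a') \<in> EdY" "(a, a') \<in> EdX"
    for a a'
  proof -
    have "(a', a) \<in> EdX" using symD[OF assms(1) that(2)] .
    then have "(h a', h' a) \<in> EdY" using that(1) by blast
    then show ?thesis using symD[OF assms(2)] by blast
  qed
  ultimately show "(h', h) \<in> exp_E VX EdX cX VY EdY cY"
    unfolding exp_E_def by auto
qed

text \<open>Choices are extensional, like the vertices of Y^X in exp_V.\<close>
definition is_choice :: "'a set \<Rightarrow> ('a \<Rightarrow> 'b set) \<Rightarrow> ('a \<Rightarrow> 'b) \<Rightarrow> bool" where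
  "is_choice VX \<eta> h \<longleftrightarrow> (\<forall>v\<in>VX. h v \<in> \<eta> v) \<and> (\<forall>v. v \<notin> VX \<longrightarrow> h v = undefined)"

lemma is_choice_exists:
  assumes "multi_hom VX EdX cX VY EdY cY \<eta>"
  obtains h where "is_choice VX \<eta> h"
proof
  show "is_choice VX \<eta> (\<lambda>v\<in>VX. SOME y. y \<in> \<eta> v)"
    using assms unfolding is_choice_def multi_hom_def by (auto intro: some_in_eq[THEN iffD2])
qed

lemma is_choice_mono: "is_choice VX \<eta> h \<Longrightarrow> \<forall>v. \<eta> v \<subseteq> \<eta>' v \<Longrightarrow> is_choice VX \<eta>' h"
  unfolding is_choice_def by blast

lemma is_choice_hom_as_multi_iff: "is_choice VX (hom_as_multi VX f) h \<longleftrightarrow> h = restrict f VX"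
  unfolding is_choice_def hom_as_multi_def by (auto simp: restrict_def)

lemma hom_as_multi_restrict: "hom_as_multi VX (restrict f VX) = hom_as_multi VX f"
  unfolding hom_as_multi_def by (auto simp: fun_eq_iff)

lemma multi_hom_hom_as_multi:
  assumes "bigraph_hom VX EdX cX VY EdY cY f" "EdX \<subseteq> VX \<times> VX"
  shows "multi_hom VX EdX cX VY EdY cY (hom_as_multi VX f)"
  using assms unfolding multi_hom_def hom_as_multi_def bigraph_hom_def by auto

lemma is_choice_in_exp_V:
  assumes "multi_hom VX EdX cX VY EdY cY \<eta>" "is_choice VX \<eta> h"
  shows "h \<in> exp_V VX cX VY cY"
  using assms unfolding exp_V_def is_choice_def multi_hom_def PiE_def extensional_def
  by fastforce

lemma choices_adjacent:
  assumes "multi_hom VX EdX cX VY EdY cY \<eta>" "is_choice VX \<eta> h" "is_choice VX \<eta> h'"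
    and "EdX \<subseteq> VX \<times> VX"
  shows "(h, h') \<in> exp_refl_E VX EdX cX VY EdY cY"
proof -
  have adj: "(k, k') \<in> exp_E VX EdX cX VY EdY cY"
    if "is_choice VX \<eta> k" "is_choice VX \<eta> k'" for k k'
  proof -
    have "(k a, k' a') \<in> EdY" if "(a, a') \<in> EdX" for a a'
      using assms(1,4) \<open>is_choice VX \<eta> k\<close> \<open>is_choice VX \<eta> k'\<close> that
      unfolding is_choice_def multi_hom_def by blast
    then show ?thesis
      using is_choice_in_exp_V[OF assms(1)] that unfolding exp_E_def by auto
  qed
  show ?thesis
    using adj assms(2,3) is_choice_in_exp_V[OF assms(1)]
    unfolding refl_part_E_def refl_part_V_def by auto
qed

lemma restrict_in_exp_refl_V:
  assumes "bigraph_hom VX EdX cX VY EdY cY f" "EdX \<subseteq> VX \<times> VX"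
  shows "restrict f VX \<in> exp_refl_V VX EdX cX VY EdY cY"
  using choices_adjacent[OF multi_hom_hom_as_multi[OF assms]] assms(2)
    is_choice_hom_as_multi_iff
  unfolding refl_part_E_def by blast

lemma hom_comparable_choices_adjacent:
  assumes "(\<eta>, \<eta>') \<in> hom_comparable VX EdX cX VY EdY cY"
    and "is_choice VX \<eta> h" "is_choice VX \<eta>' h'" "EdX \<subseteq> VX \<times> VX"
  shows "(h, h') \<in> exp_refl_E VX EdX cX VY EdY cY"
proof -
  have m: "multi_hom VX EdX cX VY EdY cY \<eta>" "multi_hom VX EdX cX VY EdY cY \<eta>'"
    and "(\<forall>v. \<eta> v \<subseteq> \<eta>' v) \<or> (\<forall>v. \<eta>' v \<subseteq> \<eta> v)"
    using assms(1) unfolding hom_comparable_def by auto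
  then show ?thesis
    using choices_adjacent[OF m(2) is_choice_mono[OF assms(2)] assms(3,4)]
      choices_adjacent[OF m(1) assms(2) is_choice_mono[OF assms(3)] assms(4)]
    by blast
qed

lemma hom_comparable_rtrancl_imp_exp_refl_rtrancl:
  assumes "(\<eta>0, \<eta>) \<in> (hom_comparable VX EdX cX VY EdY cY)\<^sup>*"
    and "multi_hom VX EdX cX VY EdY cY \<eta>0" "EdX \<subseteq> VX \<times> VX"
    and "is_choice VX \<eta>0 h0" "is_choice VX \<eta> h"
  shows "(h0, h) \<in> (exp_refl_E VX EdX cX VY EdY cY)\<^sup>*"
  using assms(1,5)
proof (induction arbitrary: h rule: rtrancl_induct)
  case base
  then show ?case using choices_adjacent[OF assms(2,4) _ assms(3)] by blast
next
  case (step \<eta>1 \<eta>2)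
  then obtain h1 where h1: "is_choice VX \<eta>1 h1"
    unfolding hom_comparable_def by (blast elim: is_choice_exists)
  show ?case
    using step.IH[OF h1] hom_comparable_choices_adjacent[OF step.hyps(2) h1 step.prems assms(3)]
    by (rule rtrancl_into_rtrancl)
qed

lemma exp_refl_E_imp_hom_comparable_rtrancl:
  assumes "(h, h') \<in> exp_refl_E VX EdX cX VY EdY cY"
    and "EdX \<subseteq> VX \<times> VX" "sym EdX" "sym EdY"
  shows "(hom_as_multi VX h, hom_as_multi VX h') \<in> (hom_comparable VX EdX cX VY EdY cY)\<^sup>*"
proof -
  have edges: "(h, h) \<in> exp_E VX EdX cX VY EdY cY" "(h', h') \<in> exp_E VX EdX cX VY EdY cY"
      "(h, h') \<in> exp_E VX EdX cX VY EdY cY" "(h', h) \<in> exp_E VX EdX cX VY EdY cY"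
    using assms(1) symD[OF sym_exp_E[OF assms(3,4)]]
    unfolding refl_part_E_def refl_part_V_def by auto
  define \<eta> where "\<eta> = (\<lambda>v. if v \<in> VX then {h v, h' v} else {})"
  have "multi_hom VX EdX cX VY EdY cY \<eta>"
    and "multi_hom VX EdX cX VY EdY cY (hom_as_multi VX h)"
    and "multi_hom VX EdX cX VY EdY cY (hom_as_multi VX h')"
    using edges assms(2)
    unfolding multi_hom_def \<eta>_def hom_as_multi_def exp_E_def exp_V_def by auto
  then have "(hom_as_multi VX h, \<eta>) \<in> hom_comparable VX EdX cX VY EdY cY"
    and "(\<eta>, hom_as_multi VX h') \<in> hom_comparable VX EdX cX VY EdY cY"
    unfolding hom_comparable_def hom_as_multi_def \<eta>_def by auto
  then show ?thesis by auto
qed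

lemma times_homotopic_iff_exp_refl_rtrancl:
  assumes "bigraph_hom VX EdX cX VY EdY cY f" "EdX \<subseteq> VX \<times> VX" "sym EdX" "sym EdY"
  shows "times_homotopic VX EdX cX VY EdY cY f g \<longleftrightarrow>
    (restrict f VX, restrict g VX) \<in> (exp_refl_E VX EdX cX VY EdY cY)\<^sup>*"
proof
  assume "times_homotopic VX EdX cX VY EdY cY f g"
  then show "(restrict f VX, restrict g VX) \<in> (exp_refl_E VX EdX cX VY EdY cY)\<^sup>*"
    unfolding times_homotopic_def
    using hom_comparable_rtrancl_imp_exp_refl_rtrancl[OF _ multi_hom_hom_as_multi[OF assms(1,2)]]
      assms(2) is_choice_hom_as_multi_iff
    by blast
next
  assume "(restrict f VX, restrict g VX) \<in> (exp_refl_E VX EdX cX VY EdY cY)\<^sup>*"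
  then have "(hom_as_multi VX (restrict f VX), hom_as_multi VX (restrict g VX))
      \<in> (hom_comparable VX EdX cX VY EdY cY)\<^sup>*"
  proof (induction rule: rtrancl_induct)
    case (step h h')
    show ?case
      using step.IH exp_refl_E_imp_hom_comparable_rtrancl[OF step.hyps(2) assms(2-4)]
      by (rule rtrancl_trans)
  qed simp
  then show "times_homotopic VX EdX cX VY EdY cY f g"
    unfolding times_homotopic_def hom_as_multi_restrict .
qed

lemma times_homotopy_slices_walk:
  assumes "times_homotopy VX EdX cX VY EdY cY n F f g" "EdX \<subseteq> VX \<times> VX"
  defines "H \<equiv> \<lambda>i. \<lambda>a\<in>VX. F (a, i)"
  shows "H 0 = restrict f VX" "H n = restrict g VX"
    and "\<forall>i<n. (H i, H (Suc i)) \<in> exp_refl_E VX EdX cX VY EdY cY"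
proof -
  have hom: "bigraph_hom (prod_V VX n) (prod_E EdX n) (prod_c cX) VY EdY cY F"
    and ends: "\<forall>a\<in>VX. F (a, 0) = f a \<and> F (a, n) = g a"
    using assms(1) unfolding times_homotopy_def by auto
  then show "H 0 = restrict f VX" "H n = restrict g VX"
    unfolding H_def by (auto simp: fun_eq_iff)
  have V: "H i \<in> exp_V VX cX VY cY" if "i \<le> n" for i
    using hom that
    unfolding H_def exp_V_def bigraph_hom_def prod_V_def I_V_def prod_c_def by auto
  have E: "(H i, H j) \<in> exp_E VX EdX cX VY EdY cY"
    if "i \<le> n" "j \<le> n" "i \<le> j + 1" "j \<le> i + 1" for i j
  proof -
    have "(H i a, H j a') \<in> EdY" if "(a, a') \<in> EdX" for a a'
    proof -
      have "((a, i), (a', j)) \<in> prod_E EdX n"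
        using that \<open>i \<le> n\<close> \<open>j \<le> n\<close> \<open>i \<le> j + 1\<close> \<open>j \<le> i + 1\<close>
        unfolding prod_E_def I_E_def by auto
      then show ?thesis
        using hom that assms(2) unfolding bigraph_hom_def H_def by auto
    qed
    then show ?thesis using V that unfolding exp_E_def by auto
  qed
  show "\<forall>i<n. (H i, H (Suc i)) \<in> exp_refl_E VX EdX cX VY EdY cY"
    using V E unfolding refl_part_E_def refl_part_V_def by auto
qed

lemma walk_times_homotopy:
  assumes "\<forall>i<n. (p i, p (Suc i)) \<in> exp_refl_E VX EdX cX VY EdY cY"
    and "p n \<in> exp_refl_V VX EdX cX VY EdY cY"
    and "p 0 = restrict f VX" "p n = restrict g VX" "sym EdX" "sym EdY"
  shows "times_homotopy VX EdX cX VY EdY cY n (\<lambda>(a, s). p s a) f g"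
proof -
  have loops: "p i \<in> exp_refl_V VX EdX cX VY EdY cY" if "i \<le> n" for i
    using walk_refl_part_V[OF assms(1,2) that] .
  have near: "(p s, p s') \<in> exp_E VX EdX cX VY EdY cY"
    if "s \<le> n" "s' \<le> n" "s \<le> s' + 1" "s' \<le> s + 1" for s s'
  proof (rule sym_walk_near_adjacent[OF sym_exp_E[OF assms(5,6)] _ _ that])
    show "\<forall>i<n. (p i, p (Suc i)) \<in> exp_E VX EdX cX VY EdY cY"
      using assms(1) unfolding refl_part_E_def by auto
    show "\<forall>i\<le>n. (p i, p i) \<in> exp_E VX EdX cX VY EdY cY"
      using loops unfolding refl_part_V_def by auto
  qed
  have "bigraph_hom (prod_V VX n) (prod_E EdX n) (prod_c cX) VY EdY cY (\<lambda>(a, s). p s a)"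
    unfolding bigraph_hom_def
  proof (intro conjI ballI)
    fix v assume "v \<in> prod_V VX n"
    then obtain a s where v: "v = (a, s)" "a \<in> VX" "s \<le> n"
      unfolding prod_V_def I_V_def by auto
    then have "p s \<in> exp_V VX cX VY cY" using loops unfolding refl_part_V_def by auto
    then show "(case v of (a, s) \<Rightarrow> p s a) \<in> VY"
      and "cY (case v of (a, s) \<Rightarrow> p s a) = prod_c cX v"
      using v unfolding exp_V_def prod_c_def by auto
  next
    fix x assume "x \<in> prod_E EdX n"
    then obtain a s a' s' where x: "x = ((a, s), (a', s'))" "(a, a') \<in> EdX"
      and "s \<le> n" "s' \<le> n" "s \<le> s' + 1" "s' \<le> s + 1"
      unfolding prod_E_def I_E_def by auto
    then have "(p s, p s') \<in> exp_E VX EdX cX VY EdY cY" using near by auto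
    then show "case x of (v, w) \<Rightarrow>
        ((case v of (a, s) \<Rightarrow> p s a), (case w of (a, s) \<Rightarrow> p s a)) \<in> EdY"
      using x unfolding exp_E_def by auto
  qed
  moreover have "\<forall>a\<in>VX. p 0 a = f a \<and> p n a = g a"
    using assms(3,4) by auto
  ultimately show ?thesis unfolding times_homotopy_def by auto
qed

lemma times_homotopy_iff_exp_refl_rtrancl:
  assumes "bigraph_hom VX EdX cX VY EdY cY g" "EdX \<subseteq> VX \<times> VX" "sym EdX" "sym EdY"
  shows "(\<exists>n F. times_homotopy VX EdX cX VY EdY cY n F f g) \<longleftrightarrow>
    (restrict f VX, restrict g VX) \<in> (exp_refl_E VX EdX cX VY EdY cY)\<^sup>*"
proof
  assume "\<exists>n F. times_homotopy VX EdX cX VY EdY cY n F f g"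
  then obtain n F where "times_homotopy VX EdX cX VY EdY cY n F f g" by blast
  from times_homotopy_slices_walk[OF this assms(2)] show
    "(restrict f VX, restrict g VX) \<in> (exp_refl_E VX EdX cX VY EdY cY)\<^sup>*"
    unfolding rtrancl_iff_walk by (intro exI[of _ n] exI[of _ "\<lambda>i. \<lambda>a\<in>VX. F (a, i)"]) blast
next
  assume "(restrict f VX, restrict g VX) \<in> (exp_refl_E VX EdX cX VY EdY cY)\<^sup>*"
  then obtain n p where "p 0 = restrict f VX" "p n = restrict g VX"
    and "\<forall>i<n. (p i, p (Suc i)) \<in> exp_refl_E VX EdX cX VY EdY cY"
    unfolding rtrancl_iff_walk by blast
  with walk_times_homotopy[OF _ _ _ _ assms(3,4)] restrict_in_exp_refl_V[OF assms(1,2)]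
  show "\<exists>n F. times_homotopy VX EdX cX VY EdY cY n F f g" by metis
qed

theorem proposition3p6:
  fixes VX :: "'a set" and EdX :: "('a \<times> 'a) set" and cX :: "'a \<Rightarrow> nat"
    and VY :: "'b set" and EdY :: "('b \<times> 'b) set" and cY :: "'b \<Rightarrow> nat"
    and f g :: "'a \<Rightarrow> 'b"
  assumes "bigraph VX EdX cX" and "bigraph VY EdY cY"
    and "bigraph_hom VX EdX cX VY EdY cY f" and "bigraph_hom VX EdX cX VY EdY cY g"
  shows "(times_homotopic VX EdX cX VY EdY cY f g
            \<longleftrightarrow> (\<exists>n F. times_homotopy VX EdX cX VY EdY cY n F f g))
       \<and> ((\<exists>n F. times_homotopy VX EdX cX VY EdY cY n F f g)
            \<longleftrightarrow> same_component
                  (refl_part_V (exp_V VX cX VY cY) (exp_E VX EdX cX VY EdY cY))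
                  (refl_part_E (exp_V VX cX VY cY) (exp_E VX EdX cX VY EdY cY))
                  (restrict f VX) (restrict g VX))"
proof -
  have X: "EdX \<subseteq> VX \<times> VX" "sym EdX" and Y: "sym EdY"
    using assms(1,2) unfolding bigraph_def graph_def by auto
  show ?thesis
    using times_homotopic_iff_exp_refl_rtrancl[OF assms(3) X Y]
      times_homotopy_iff_exp_refl_rtrancl[OF assms(4) X Y]
      restrict_in_exp_refl_V[OF assms(3) X(1)] restrict_in_exp_refl_V[OF assms(4) X(1)]
    unfolding same_component_def by blast
qed

end
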